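(* Let $\Gamma$ be a finite ranked poset, $A'=A'_\Gamma$, and let $\hat C_\bullet$ and the maps $d:A'\otimes_{\mathbb{F}}\hat C_n\to A'\otimes_{\mathbb{F}}\hat C_{n-1}$ ($n\ge 0$) be as defined in the context. Then $d\circ d=0$, so $(A'\otimes\hat C_\bullet,d)$ is a chain complex of free left $A'$-modules.
   Context: Fix a field $\mathbb{F}$. A finite ranked poset is a finite poset $\Gamma$ (strict order $<$) with unique minimal element $*$ such that for each $x$ all maximal chains in $[*,x]$ have the same length $rk(x)$; $\Gamma_+=\Gamma\setminus\{*\}$, $d(x,y)=rk(x)-rk(y)$ for $y<x$. $x\to y$ ($x$ covers $y$) if $y<x$, $d(x,y)=1$; these are edges. $W$ is the $\mathbb{F}$-space with basis the edges, $T(W)$ the free algebra. For a path $\pi$: $b=c_0\to\cdots\to c_n=a$ with edges $e_1,\dots,e_n$, $e(\pi,j)$ is defined by $(s-e_1)\cdots(s-e_n)=\sum_j e(\pi,j)s^{n-j}$ ($s$ central). $A_\Gamma=T(W)/I$ with $I$ generated by $e(\pi,j)-e(\pi',j)$ for all pairs of paths $\pi,\pi'$ with the same endpoints $a<b$ and $0\le j\le d(b,a)$; edges have degree 1. An edge $x\to y$ has rank $rk(x)$; $F^mA_\Gamma$ is spanned by images of products of edges with rank sum $\le m$, and $A'=\bigoplus_m F^mA_\Gamma/F^{m-1}A_\Gamma$. For each $x\in\Gamma_+$ fix one distinguished edge $x\to y$, and let $\pi_x$ be the path from $x$ to $*$ following distinguished edges. For $1\le j\le rk(x)$, $e'(x,j)\in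 A'$ is the class in $F^mA_\Gamma/F^{m-1}A_\Gamma$, $m=j\,rk(x)-j(j-1)/2$, of the product $e_1e_2\cdots e_j$ of the first $j$ edges of $\pi_x$. For $a<b$ in $\Gamma$ set $f(b,a)=e'(b,d(b,a))$. For $b\in\Gamma$ and $1\le q\le rk(b)$, $\Gamma_{b,q}=\{a: *<a<b,\ d(b,a)\le q-1\}$. Let $C_\bullet(b,q)$ be the reduced simplicial chain complex of the order complex of $\Gamma_{b,q}$: for $n\ge0$, $C_n(b,q)$ has basis the symbols $[b_n>\cdots>b_0]_{b,q}$ for strict chains in $\Gamma_{b,q}$, and $C_{-1}(b,q)=\mathbb{F}$ with basis $[\,]_{b,q}$; the differential is $\delta[b_n>\cdots>b_0]_{b,q}=\sum_{i=0}^n(-1)^i[b_n>\cdots>\widehat{b_{n-i}}>\cdots>b_0]_{b,q}$ (so $\delta[b_0]_{b,q}=[\,]_{b,q}$). Put $\hat C_n=\bigoplus_{b\in\Gamma_+}\bigoplus_{1\le q\le rk(b)}C_n(b,q)$ with differential $\hat\delta=\bigoplus\delta$. Define $A'$-linear maps $d:A'\otimes\hat C_n\to A'\otimes\hat C_{n-1}$ for $n\ge0$ by: for $m\in A'$ and a basis chain with $k=d(b,b_n)$, $d(m\otimes[b_n>\cdots>b_0]_{b,q})=m\,f(b,b_n)\otimes[b_{n-1}>\cdots>b_0]_{b_n,q-k}-m\otimes\hat\delta([b_n>\cdots>b_0]_{b,q})$. *)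

theory Defs
  imports Main
begin

text \<open>A poset is given by a carrier G, a strict order lt on it, and the minimal element s (= *).\<close>

definition interval_below :: "'v set \<Rightarrow> ('v \<Rightarrow> 'v \<Rightarrow> bool) \<Rightarrow> 'v \<Rightarrow> 'v \<Rightarrow> 'v set" where
  "interval_below G lt s x = {z \<in> G. (z = s \<or> lt s z) \<and> (z = x \<or> lt z x)}"

definition is_chain_in :: "('v \<Rightarrow> 'v \<Rightarrow> bool) \<Rightarrow> 'v set \<Rightarrow> 'v set \<Rightarrow> bool" where
  "is_chain_in lt S C \<longleftrightarrow> C \<subseteq> S \<and> (\<forall>a\<in>C. \<forall>b\<in>C. a = b \<or> lt a b \<or> lt b a)"

definition is_maxchain_in :: "('v \<Rightarrow> 'v \<Rightarrow> bool) \<Rightarrow> 'v set \<Rightarrow> 'v set \<Rightarrow> bool" where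
  "is_maxchain_in lt S C \<longleftrightarrow> is_chain_in lt S C \<and> (\<forall>D. is_chain_in lt S D \<and> C \<subseteq> D \<longrightarrow> D = C)"

definition finite_ranked_poset :: "'v set \<Rightarrow> ('v \<Rightarrow> 'v \<Rightarrow> bool) \<Rightarrow> 'v \<Rightarrow> bool" where
  "finite_ranked_poset G lt s \<longleftrightarrow>
     finite G \<and>
     (\<forall>x\<in>G. \<not> lt x x) \<and>
     (\<forall>x\<in>G. \<forall>y\<in>G. \<forall>z\<in>G. lt x y \<longrightarrow> lt y z \<longrightarrow> lt x z) \<and>
     s \<in> G \<and> (\<forall>y\<in>G. \<not> lt y s) \<and>
     (\<forall>m\<in>G. (\<forall>y\<in>G. \<not> lt y m) \<longrightarrow> m = s) \<and>
     (\<forall>x\<in>G. \<forall>C1 C2. is_maxchain_in lt (interval_below G lt s x) C1 \<longrightarrow>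
                       is_maxchain_in lt (interval_below G lt s x) C2 \<longrightarrow> card C1 = card C2)"

text \<open>rk x = length (= cardinality minus one) of a maximal chain in [*,x].\<close>
definition rk :: "'v set \<Rightarrow> ('v \<Rightarrow> 'v \<Rightarrow> bool) \<Rightarrow> 'v \<Rightarrow> 'v \<Rightarrow> nat" where
  "rk G lt s x = (SOME n. \<exists>C. is_maxchain_in lt (interval_below G lt s x) C \<and> card C = Suc n)"

definition rdist :: "'v set \<Rightarrow> ('v \<Rightarrow> 'v \<Rightarrow> bool) \<Rightarrow> 'v \<Rightarrow> 'v \<Rightarrow> 'v \<Rightarrow> nat" where
  "rdist G lt s b a = rk G lt s b - rk G lt s a"

definition covers :: "'v set \<Rightarrow> ('v \<Rightarrow> 'v \<Rightarrow> bool) \<Rightarrow> 'v \<Rightarrow> 'v \<Rightarrow> 'v \<Rightarrow> bool" where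
  "covers G lt s x y \<longleftrightarrow> x \<in> G \<and> y \<in> G \<and> lt y x \<and> rdist G lt s x y = 1"

definition edges :: "'v set \<Rightarrow> ('v \<Rightarrow> 'v \<Rightarrow> bool) \<Rightarrow> 'v \<Rightarrow> ('v \<times> 'v) set" where
  "edges G lt s = {(x, y). covers G lt s x y}"

section \<open>The free algebra T(W): finitely supported functions on words of edges\<close>

definition in_TW :: "'e set \<Rightarrow> ('e list \<Rightarrow> 'a::zero) \<Rightarrow> bool" where
  "in_TW E p \<longleftrightarrow> finite {w. p w \<noteq> 0} \<and> (\<forall>w. p w \<noteq> 0 \<longrightarrow> set w \<subseteq> E)"

definition tmono :: "'e list \<Rightarrow> ('e list \<Rightarrow> 'a::{zero,one})" where
  "tmono u = (\<lambda>w. if w = u then 1 else 0)"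

definition tmul :: "('e list \<Rightarrow> 'a::semiring_0) \<Rightarrow> ('e list \<Rightarrow> 'a) \<Rightarrow> ('e list \<Rightarrow> 'a)" where
  "tmul p q = (\<lambda>w. \<Sum>i\<in>{0..length w}. p (take i w) * q (drop i w))"

text \<open>e(pi,j): coefficient of s^(n-j) in (s-e_1)...(s-e_n).\<close>
definition esym :: "'e list \<Rightarrow> nat \<Rightarrow> ('e list \<Rightarrow> 'a::comm_ring_1)" where
  "esym es j = (\<lambda>w. (-1) ^ j *
      of_nat (card {S. S \<subseteq> {..<length es} \<and> card S = j \<and> nths es S = w}))"

definition is_path :: "'v set \<Rightarrow> ('v \<Rightarrow> 'v \<Rightarrow> bool) \<Rightarrow> 'v \<Rightarrow> 'v list \<Rightarrow> 'v \<Rightarrow> 'v \<Rightarrow> bool" where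
  "is_path G lt s cs b a \<longleftrightarrow> cs \<noteq> [] \<and> hd cs = b \<and> last cs = a \<and>
     (\<forall>i. Suc i < length cs \<longrightarrow> covers G lt s (cs ! i) (cs ! Suc i))"

definition path_edges :: "'v list \<Rightarrow> ('v \<times> 'v) list" where
  "path_edges cs = zip cs (tl cs)"

definition rels :: "'v set \<Rightarrow> ('v \<Rightarrow> 'v \<Rightarrow> bool) \<Rightarrow> 'v \<Rightarrow> (('v \<times> 'v) list \<Rightarrow> 'a::comm_ring_1) set" where
  "rels G lt s = {(\<lambda>w. esym (path_edges p) j w - esym (path_edges p') j w) | a b p p' j.
      a \<in> G \<and> b \<in> G \<and> lt a b \<and> is_path G lt s p b a \<and> is_path G lt s p' b a \<and>
      j \<le> rdist G lt s b a}"

inductive_set two_sided_ideal :: "'e set \<Rightarrow> ('e list \<Rightarrow> 'a::comm_ring_1) set \<Rightarrow> ('e list \<Rightarrow> 'a) set"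
  for E R where
  gen: "r \<in> R \<Longrightarrow> r \<in> two_sided_ideal E R"
| zero: "(\<lambda>_. 0) \<in> two_sided_ideal E R"
| add: "x \<in> two_sided_ideal E R \<Longrightarrow> y \<in> two_sided_ideal E R \<Longrightarrow> (\<lambda>w. x w + y w) \<in> two_sided_ideal E R"
| lmul: "in_TW E p \<Longrightarrow> x \<in> two_sided_ideal E R \<Longrightarrow> tmul p x \<in> two_sided_ideal E R"
| rmul: "in_TW E p \<Longrightarrow> x \<in> two_sided_ideal E R \<Longrightarrow> tmul x p \<in> two_sided_ideal E R"

definition AI :: "'v set \<Rightarrow> ('v \<Rightarrow> 'v \<Rightarrow> bool) \<Rightarrow> 'v \<Rightarrow> (('v \<times> 'v) list \<Rightarrow> 'a::comm_ring_1) set" where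
  "AI G lt s = two_sided_ideal (edges G lt s) (rels G lt s)"

definition word_rank :: "'v set \<Rightarrow> ('v \<Rightarrow> 'v \<Rightarrow> bool) \<Rightarrow> 'v \<Rightarrow> ('v \<times> 'v) list \<Rightarrow> nat" where
  "word_rank G lt s w = (\<Sum>e\<leftarrow>w. rk G lt s (fst e))"

text \<open>Preimage in T(W) of F^m A_Gamma (m may be -1, giving the ideal I).\<close>
definition Fil :: "'v set \<Rightarrow> ('v \<Rightarrow> 'v \<Rightarrow> bool) \<Rightarrow> 'v \<Rightarrow> int \<Rightarrow> (('v \<times> 'v) list \<Rightarrow> 'a::comm_ring_1) set" where
  "Fil G lt s m = {x. in_TW (edges G lt s) x \<and>
      (\<exists>y\<in>AI G lt s. \<forall>w. x w - y w \<noteq> 0 \<longrightarrow> int (word_rank G lt s w) \<le> m)}"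

text \<open>Elements of A' are represented by families g, g m a representative in T(W) of the
  degree-m component in F^m/F^(m-1); Aeq is equality in A'.\<close>
type_synonym ('v, 'a) Arep = "nat \<Rightarrow> ('v \<times> 'v) list \<Rightarrow> 'a"

definition is_Arep :: "'v set \<Rightarrow> ('v \<Rightarrow> 'v \<Rightarrow> bool) \<Rightarrow> 'v \<Rightarrow> ('v, 'a::comm_ring_1) Arep \<Rightarrow> bool" where
  "is_Arep G lt s g \<longleftrightarrow> (\<forall>m. g m \<in> Fil G lt s (int m)) \<and> finite {m. g m \<noteq> (\<lambda>_. 0)}"

definition Aeq :: "'v set \<Rightarrow> ('v \<Rightarrow> 'v \<Rightarrow> bool) \<Rightarrow> 'v \<Rightarrow> ('v, 'a::comm_ring_1) Arep \<Rightarrow> ('v, 'a) Arep \<Rightarrow> bool" where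
  "Aeq G lt s g h \<longleftrightarrow> (\<forall>m. (\<lambda>w. g m w - h m w) \<in> Fil G lt s (int m - 1))"

definition azero :: "('v, 'a::zero) Arep" where
  "azero = (\<lambda>m w. 0)"

definition aone :: "('v, 'a::{zero,one}) Arep" where
  "aone = (\<lambda>m. if m = 0 then tmono [] else (\<lambda>_. 0))"

definition aadd :: "('v, 'a::plus) Arep \<Rightarrow> ('v, 'a) Arep \<Rightarrow> ('v, 'a) Arep" where
  "aadd g h = (\<lambda>m w. g m w + h m w)"

definition amul :: "('v, 'a::semiring_0) Arep \<Rightarrow> ('v, 'a) Arep \<Rightarrow> ('v, 'a) Arep" where
  "amul g h = (\<lambda>m w. \<Sum>i\<le>m. tmul (g i) (h (m - i)) w)"

text \<open>First j edges of the distinguished path pi_x.\<close>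
definition dpath_edges :: "('v \<Rightarrow> 'v) \<Rightarrow> 'v \<Rightarrow> nat \<Rightarrow> ('v \<times> 'v) list" where
  "dpath_edges dist x j = map (\<lambda>i. ((dist ^^ i) x, (dist ^^ Suc i) x)) [0..<j]"

definition eprime :: "'v set \<Rightarrow> ('v \<Rightarrow> 'v \<Rightarrow> bool) \<Rightarrow> 'v \<Rightarrow> ('v \<Rightarrow> 'v) \<Rightarrow> 'v \<Rightarrow> nat \<Rightarrow> ('v, 'a::comm_ring_1) Arep" where
  "eprime G lt s dist x j =
     (\<lambda>m. if m = j * rk G lt s x - j * (j - 1) div 2 then tmono (dpath_edges dist x j) else (\<lambda>_. 0))"

definition fA :: "'v set \<Rightarrow> ('v \<Rightarrow> 'v \<Rightarrow> bool) \<Rightarrow> 'v \<Rightarrow> ('v \<Rightarrow> 'v) \<Rightarrow> 'v \<Rightarrow> 'v \<Rightarrow> ('v, 'a::comm_ring_1) Arep" where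
  "fA G lt s dist b a = eprime G lt s dist b (rdist G lt s b a)"

definition Gamma_bq :: "'v set \<Rightarrow> ('v \<Rightarrow> 'v \<Rightarrow> bool) \<Rightarrow> 'v \<Rightarrow> 'v \<Rightarrow> nat \<Rightarrow> 'v set" where
  "Gamma_bq G lt s b q = {a \<in> G. lt s a \<and> lt a b \<and> rdist G lt s b a \<le> q - 1}"

text \<open>Basis element (b, q, [b_n, ..., b_0]) of C_n(b,q) inside hat C_n (the empty list is [ ]_{b,q}).\<close>
definition is_basis_chain :: "'v set \<Rightarrow> ('v \<Rightarrow> 'v \<Rightarrow> bool) \<Rightarrow> 'v \<Rightarrow> 'v \<times> nat \<times> 'v list \<Rightarrow> bool" where
  "is_basis_chain G lt s c = (case c of (b, q, cs) \<Rightarrow>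
     b \<in> G \<and> b \<noteq> s \<and> 1 \<le> q \<and> q \<le> rk G lt s b \<and>
     sorted_wrt (\<lambda>x y. lt y x) cs \<and> set cs \<subseteq> Gamma_bq G lt s b q)"

definition del_at :: "nat \<Rightarrow> 'v list \<Rightarrow> 'v list" where
  "del_at i cs = take i cs @ drop (Suc i) cs"

text \<open>Coefficient in A' of basis chain c' in d(1 \<otimes> c), for a chain c of degree \<ge> 0.\<close>
definition dcoef :: "'v set \<Rightarrow> ('v \<Rightarrow> 'v \<Rightarrow> bool) \<Rightarrow> 'v \<Rightarrow> ('v \<Rightarrow> 'v) \<Rightarrow>
    'v \<times> nat \<times> 'v list \<Rightarrow> 'v \<times> nat \<times> 'v list \<Rightarrow> ('v, 'a::comm_ring_1) Arep" where
  "dcoef G lt s dist c c' = (case c of (b, q, cs) \<Rightarrow>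
     aadd (if c' = (hd cs, q - rdist G lt s b (hd cs), tl cs) then fA G lt s dist b (hd cs) else azero)
          (\<lambda>m w. \<Sum>i<length cs. if c' = (b, q, del_at i cs) then - ((-1) ^ i * aone m w) else 0))"

text \<open>The A'-linear map d on A' \<otimes> hat C, elements given as finitely supported coefficient functions.\<close>
definition Dmap :: "'v set \<Rightarrow> ('v \<Rightarrow> 'v \<Rightarrow> bool) \<Rightarrow> 'v \<Rightarrow> ('v \<Rightarrow> 'v) \<Rightarrow>
    ('v \<times> nat \<times> 'v list \<Rightarrow> ('v, 'a::comm_ring_1) Arep) \<Rightarrow> ('v \<times> nat \<times> 'v list \<Rightarrow> ('v, 'a) Arep)" where
  "Dmap G lt s dist x = (\<lambda>c' m w. \<Sum>c\<in>{c. x c \<noteq> azero}. amul (x c) (dcoef G lt s dist c c') m w)"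

end

theory Submission
  imports Defs
begin

text \<open>
  In top filtration degree, \<open>e(\<pi>, j)\<close> is \<open>(-1)^j\<close> times the word formed by the first \<open>j\<close> edges of
  \<open>\<pi>\<close>: every other subword of length \<open>j\<close> has a smaller rank sum, because ranks decrease strictly
  along a path. So the relations \<open>e(\<pi>, j) = e(\<pi>', j)\<close> say that the first \<open>j\<close> edges of any two
  paths with the same endpoints agree in \<open>A'\<close>. Comparing the distinguished path from \<open>b\<close> with a
  path that runs from \<open>b\<close> to \<open>b'\<close> and then follows the distinguished path from \<open>b'\<close> gives
  \<open>f(b, b') f(b', b'') = f(b, b'')\<close>. Hence in \<open>d (d [b' > b'' > \<dots>]\<^sub>b\<^sub>,\<^sub>q)\<close> the term
  \<open>f(b, b') f(b', b'')\<close> cancels the term obtained by first deleting \<open>b'\<close> and then applying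
  \<open>f(b, b'')\<close>, the terms with one \<open>f\<close>-step and one deletion cancel in pairs, and the double
  deletions cancel as in \<open>\<delta> \<circ> \<delta> = 0\<close>.
\<close>

lemma drop_eq_iff_suffix:
  assumes "i \<le> length w"
  shows "drop i w = u \<longleftrightarrow> i = length w - length u \<and> (\<exists>x. w = x @ u)"
proof
  assume "drop i w = u"
  then show "i = length w - length u \<and> (\<exists>x. w = x @ u)"
    using assms by (auto intro: exI[of _ "take i w"])
qed auto

lemma tmul_tmono_right:
  fixes p :: "'e list \<Rightarrow> 'a::comm_ring_1"
  shows "tmul p (tmono u) w = (if \<exists>x. w = x @ u then p (take (length w - length u) w) else 0)"
proof -
  have "tmul p (tmono u) w = (\<Sum>i\<in>{0..length w}.
      if i = length w - length u then (if \<exists>x. w = x @ u then p (take i w) else 0) else 0)"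
    unfolding tmul_def tmono_def by (rule sum.cong) (auto simp: drop_eq_iff_suffix)
  then show ?thesis by simp
qed

lemma tmul_tmono_Nil_right: "tmul p (tmono []) w = (p w :: 'a::comm_ring_1)"
  by (simp add: tmul_tmono_right)

lemma tmul_tmono_tmono:
  "tmul (tmono u) (tmono v) = (tmono (u @ v) :: 'e list \<Rightarrow> 'a::comm_ring_1)"
  by (rule ext, unfold tmul_tmono_right) (auto simp: tmono_def)

lemma tmul_tmono_assoc:
  fixes p :: "'e list \<Rightarrow> 'a::comm_ring_1"
  shows "tmul (tmul p (tmono u)) (tmono v) = tmul p (tmono (u @ v))"
  by (rule ext, unfold tmul_tmono_right) auto

lemma tmul_diff_left:
  "tmul (\<lambda>w. p w - q w) r w = tmul p r w - (tmul q r w :: 'a::comm_ring_1)"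
  unfolding tmul_def by (simp add: left_diff_distrib sum_subtractf)

lemma tmul_diff_right:
  "tmul r (\<lambda>w. p w - q w) w = tmul r p w - (tmul r q w :: 'a::comm_ring_1)"
  unfolding tmul_def by (simp add: right_diff_distrib sum_subtractf)

lemma tmul_zero_left: "tmul (\<lambda>w. 0) r w = (0::'a::comm_ring_1)"
  unfolding tmul_def by simp

lemma tmul_zero_right: "tmul r (\<lambda>w. 0) w = (0::'a::comm_ring_1)"
  unfolding tmul_def by simp

lemma tmul_scalar_left:
  "tmul (\<lambda>w. if w = [] then a else 0) r w = a * (r w :: 'a::comm_ring_1)"
proof -
  have "tmul (\<lambda>w. if w = [] then a else 0) r w = (\<Sum>i\<in>{0..length w}. if i = 0 then a * r w else 0)"
    unfolding tmul_def by (rule sum.cong) auto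
  then show ?thesis by simp
qed

lemma tmul_nonzeroE:
  fixes p q :: "'e list \<Rightarrow> 'a::comm_ring_1"
  assumes "tmul p q w \<noteq> 0"
  obtains i where "p (take i w) \<noteq> 0" "q (drop i w) \<noteq> 0"
  using assms unfolding tmul_def by (metis (no_types, lifting) mult_not_zero sum.neutral)

lemma in_TW_tmul:
  fixes p q :: "'e list \<Rightarrow> 'a::comm_ring_1"
  assumes p: "in_TW E p" and q: "in_TW E q"
  shows "in_TW E (tmul p q)"
proof -
  have supp: "{w. tmul p q w \<noteq> 0} \<subseteq> (\<lambda>(u, v). u @ v) ` ({u. p u \<noteq> 0} \<times> {v. q v \<noteq> 0})"
  proof
    fix w assume "w \<in> {w. tmul p q w \<noteq> 0}"
    then obtain i where "p (take i w) \<noteq> 0" "q (drop i w) \<noteq> 0"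
      by (auto elim: tmul_nonzeroE)
    then show "w \<in> (\<lambda>(u, v). u @ v) ` ({u. p u \<noteq> 0} \<times> {v. q v \<noteq> 0})"
      by (intro rev_image_eqI[of "(take i w, drop i w)"]) auto
  qed
  have "finite {w. tmul p q w \<noteq> 0}"
    using p q unfolding in_TW_def by (intro finite_subset[OF supp] finite_imageI) simp
  moreover have "set w \<subseteq> E" if "tmul p q w \<noteq> 0" for w
    using supp that p q unfolding in_TW_def by fastforce
  ultimately show ?thesis unfolding in_TW_def by auto
qed

lemma in_TW_diff:
  fixes p q :: "'e list \<Rightarrow> 'a::comm_ring_1"
  assumes "in_TW E p" "in_TW E q"
  shows "in_TW E (\<lambda>w. p w - q w)"
proof -
  have "{w. p w - q w \<noteq> 0} \<subseteq> {w. p w \<noteq> 0} \<union> {w. q w \<noteq> 0}" by auto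
  then show ?thesis using assms unfolding in_TW_def by (auto intro: finite_subset)
qed

lemma in_TW_add:
  fixes p q :: "'e list \<Rightarrow> 'a::comm_ring_1"
  assumes "in_TW E p" "in_TW E q"
  shows "in_TW E (\<lambda>w. p w + q w)"
proof -
  have "{w. p w + q w \<noteq> 0} \<subseteq> {w. p w \<noteq> 0} \<union> {w. q w \<noteq> 0}" by auto
  then show ?thesis using assms unfolding in_TW_def by (auto intro: finite_subset)
qed

lemma in_TW_zero: "in_TW E (\<lambda>w. 0::'a::comm_ring_1)"
  unfolding in_TW_def by auto

lemma in_TW_scalar: "in_TW E (\<lambda>w. if w = [] then a else (0::'a::comm_ring_1))"
  unfolding in_TW_def by (auto intro: finite_subset[of _ "{[]}"])

lemma in_TW_tmono:
  "set u \<subseteq> E \<Longrightarrow> in_TW E (tmono u :: 'e list \<Rightarrow> 'a::comm_ring_1)"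
  unfolding in_TW_def tmono_def by (auto intro: finite_subset[of _ "{u}"])

lemma in_TW_esym:
  assumes "set es \<subseteq> E"
  shows "in_TW E (esym es j :: 'e list \<Rightarrow> 'a::comm_ring_1)"
proof -
  have supp: "{w. (esym es j w :: 'a) \<noteq> 0} \<subseteq> nths es ` Pow {..<length es}"
  proof (rule subsetI, rule ccontr)
    fix w assume "w \<in> {w. (esym es j w :: 'a) \<noteq> 0}" "w \<notin> nths es ` Pow {..<length es}"
    moreover from this(2) have "{S. S \<subseteq> {..<length es} \<and> card S = j \<and> nths es S = w} = {}"
      by auto
    ultimately show False by (simp add: esym_def)
  qed
  then have "finite {w. (esym es j w :: 'a) \<noteq> 0}"
    by (rule finite_subset) simp
  moreover have "set w \<subseteq> E" if "(esym es j w :: 'a) \<noteq> 0" for w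
    using supp that assms set_nths_subset by fastforce
  ultimately show ?thesis unfolding in_TW_def by auto
qed

lemma path_edges_Cons:
  "ys \<noteq> [] \<Longrightarrow> path_edges (x # ys) = (x, hd ys) # path_edges ys"
  by (cases ys) (simp_all add: path_edges_def)

lemma length_path_edges: "length (path_edges cs) = length cs - 1"
  by (simp add: path_edges_def)

lemma nth_path_edges: "i < length cs - 1 \<Longrightarrow> path_edges cs ! i = (cs ! i, cs ! Suc i)"
  by (simp add: path_edges_def nth_tl)

lemma path_edges_append:
  "xs \<noteq> [] \<Longrightarrow> last xs = hd ys \<Longrightarrow> ys \<noteq> [] \<Longrightarrow>
     path_edges (xs @ tl ys) = path_edges xs @ path_edges ys"
proof (induction xs)
  case (Cons x xs)
  show ?case
  proof (cases "xs = []")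
    case True
    then show ?thesis using Cons.prems by (cases ys) (simp_all add: path_edges_def)
  next
    case False
    then show ?thesis using Cons by (simp add: path_edges_Cons)
  qed
qed simp

lemma set_path_edges_conv: "set (path_edges cs) = {(cs ! i, cs ! Suc i) | i. Suc i < length cs}"
proof -
  have "set (path_edges cs) = {(cs ! i, tl cs ! i) | i. i < length cs - 1}"
    unfolding path_edges_def set_zip by simp
  then show ?thesis by (auto simp: nth_tl)
qed

lemma is_path_iff_edges:
  "is_path G lt s cs b a \<longleftrightarrow> cs \<noteq> [] \<and> hd cs = b \<and> last cs = a \<and>
     (\<forall>e\<in>set (path_edges cs). covers G lt s (fst e) (snd e))"
  unfolding is_path_def set_path_edges_conv by auto

lemma is_path_append:
  assumes "is_path G lt s cs1 b c" "is_path G lt s cs2 c a"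
  shows "is_path G lt s (cs1 @ tl cs2) b a"
    and "path_edges (cs1 @ tl cs2) = path_edges cs1 @ path_edges cs2"
proof -
  have cs: "cs1 \<noteq> []" "hd cs1 = b" "last cs1 = c" "cs2 \<noteq> []" "hd cs2 = c" "last cs2 = a"
    using assms unfolding is_path_def by auto
  then show edges: "path_edges (cs1 @ tl cs2) = path_edges cs1 @ path_edges cs2"
    by (intro path_edges_append) simp_all
  have "last (cs1 @ tl cs2) = a"
    using cs by (cases cs2) (auto simp: last_append)
  then show "is_path G lt s (cs1 @ tl cs2) b a"
    using assms cs unfolding is_path_iff_edges edges by auto
qed

lemma is_path_Cons:
  assumes "covers G lt s b c" "is_path G lt s cs c a"
  shows "is_path G lt s (b # cs) b a"
  unfolding is_path_def
proof (intro conjI allI impI)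
  fix i assume "Suc i < length (b # cs)"
  then show "covers G lt s ((b # cs) ! i) ((b # cs) ! Suc i)"
    using assms unfolding is_path_def by (cases i) (auto simp: hd_conv_nth)
qed (use assms in \<open>auto simp: is_path_def\<close>)

lemma set_path_edges:
  "is_path G lt s cs b a \<Longrightarrow> set (path_edges cs) \<subseteq> edges G lt s"
  unfolding is_path_iff_edges edges_def by auto

section \<open>The ideal and the filtration\<close>

lemma in_TW_AI:
  assumes "y \<in> AI G lt s"
  shows "in_TW (edges G lt s) (y :: ('v \<times> 'v) list \<Rightarrow> 'a::comm_ring_1)"
  using assms unfolding AI_def
proof (induction rule: two_sided_ideal.induct)
  case (gen r)
  then obtain p p' j a b where r: "r = (\<lambda>w. esym (path_edges p) j w - esym (path_edges p') j w)"
     "is_path G lt s p b a" "is_path G lt s p' b a"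
    unfolding rels_def by blast
  show ?case unfolding r(1)
    by (intro in_TW_diff in_TW_esym set_path_edges[OF r(2)] set_path_edges[OF r(3)])
qed (auto intro: in_TW_zero in_TW_add in_TW_tmul)

lemma AI_zero: "(\<lambda>w. 0) \<in> AI G lt s"
  unfolding AI_def by (rule two_sided_ideal.zero)

lemma AI_add:
  "x \<in> AI G lt s \<Longrightarrow> y \<in> AI G lt s \<Longrightarrow> (\<lambda>w. x w + y w) \<in> AI G lt s"
  unfolding AI_def by (rule two_sided_ideal.add)

lemma AI_scalar_mult:
  assumes "y \<in> AI G lt s"
  shows "(\<lambda>w. a * y w) \<in> AI G lt s"
proof -
  have "tmul (\<lambda>w. if w = [] then a else 0) y \<in> AI G lt s"
    using assms unfolding AI_def by (intro two_sided_ideal.lmul in_TW_scalar)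
  moreover have "tmul (\<lambda>w. if w = [] then a else 0) y = (\<lambda>w. a * y w)"
    by (rule ext, rule tmul_scalar_left)
  ultimately show ?thesis by simp
qed

lemma AI_diff:
  assumes "x \<in> AI G lt s" "y \<in> AI G lt s"
  shows "(\<lambda>w. x w - y w) \<in> AI G lt s"
  using AI_add[OF assms(1) AI_scalar_mult[OF assms(2), of "-1"]] by simp

lemma FilI:
  assumes "in_TW (edges G lt s) x" "y \<in> AI G lt s"
    "\<And>w. x w - y w \<noteq> 0 \<Longrightarrow> int (word_rank G lt s w) \<le> m"
  shows "x \<in> Fil G lt s m"
  using assms unfolding Fil_def by blast

lemma Fil_zero: "(\<lambda>w. 0) \<in> Fil G lt s m"
  by (rule FilI[OF in_TW_zero AI_zero]) simp

lemma Fil_diff: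
  assumes "x1 \<in> Fil G lt s m" "x2 \<in> Fil G lt s m"
  shows "(\<lambda>w. x1 w - x2 w) \<in> Fil G lt s m"
proof -
  obtain y1 where 1: "in_TW (edges G lt s) x1" "y1 \<in> AI G lt s"
    "\<And>w. x1 w - y1 w \<noteq> 0 \<Longrightarrow> int (word_rank G lt s w) \<le> m"
    using assms(1) unfolding Fil_def by blast
  obtain y2 where 2: "in_TW (edges G lt s) x2" "y2 \<in> AI G lt s"
    "\<And>w. x2 w - y2 w \<noteq> 0 \<Longrightarrow> int (word_rank G lt s w) \<le> m"
    using assms(2) unfolding Fil_def by blast
  show ?thesis
  proof (rule FilI[OF in_TW_diff[OF 1(1) 2(1)] AI_diff[OF 1(2) 2(2)]])
    fix w assume "x1 w - x2 w - (y1 w - y2 w) \<noteq> 0"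
    then have "x1 w - y1 w \<noteq> 0 \<or> x2 w - y2 w \<noteq> 0" by (auto simp: algebra_simps)
    then show "int (word_rank G lt s w) \<le> m" using 1(3) 2(3) by blast
  qed
qed

lemma Fil_add:
  assumes "x1 \<in> Fil G lt s m" "x2 \<in> Fil G lt s m"
  shows "(\<lambda>w. x1 w + x2 w) \<in> Fil G lt s m"
  using Fil_diff[OF assms(1) Fil_diff[OF Fil_zero assms(2)]] by simp

lemma Fil_sum:
  assumes "finite I" "\<And>i. i \<in> I \<Longrightarrow> f i \<in> Fil G lt s m"
  shows "(\<lambda>w. \<Sum>i\<in>I. f i w) \<in> Fil G lt s m"
  using assms by (induction I rule: finite_induct) (auto intro: Fil_zero Fil_add)

lemma word_rank_append: "word_rank G lt s (u @ v) = word_rank G lt s u + word_rank G lt s v"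
  unfolding word_rank_def by simp

lemma Fil_tmul:
  fixes p q :: "('v \<times> 'v) list \<Rightarrow> 'a::comm_ring_1"
  assumes "p \<in> Fil G lt s a" "q \<in> Fil G lt s b"
  shows "tmul p q \<in> Fil G lt s (a + b)"
proof -
  obtain y1 where 1: "in_TW (edges G lt s) p" "y1 \<in> AI G lt s"
    "\<And>w. p w - y1 w \<noteq> 0 \<Longrightarrow> int (word_rank G lt s w) \<le> a"
    using assms(1) unfolding Fil_def by blast
  obtain y2 where 2: "in_TW (edges G lt s) q" "y2 \<in> AI G lt s"
    "\<And>w. q w - y2 w \<noteq> 0 \<Longrightarrow> int (word_rank G lt s w) \<le> b"
    using assms(2) unfolding Fil_def by blast
  define u1 where "u1 = (\<lambda>w. p w - y1 w)"
  define u2 where "u2 = (\<lambda>w. q w - y2 w)"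
  have u1: "in_TW (edges G lt s) u1" unfolding u1_def by (intro in_TW_diff 1(1) in_TW_AI 1(2))
  \<comment> \<open>\<open>p q = u1 u2 + (y1 q + u1 y2)\<close>, and the bracket lies in the ideal\<close>
  define y where "y = (\<lambda>w. tmul y1 q w + tmul u1 y2 w)"
  have "y \<in> AI G lt s"
    using 1(2) 2(1,2) u1 unfolding y_def AI_def
    by (intro two_sided_ideal.add two_sided_ideal.rmul two_sided_ideal.lmul)
  then show ?thesis
  proof (rule FilI[OF in_TW_tmul[OF 1(1) 2(1)]])
    fix w assume "tmul p q w - y w \<noteq> 0"
    moreover have "tmul p q w - y w = tmul u1 u2 w"
      unfolding y_def u1_def u2_def tmul_diff_left tmul_diff_right by (simp add: algebra_simps)
    ultimately obtain i where "u1 (take i w) \<noteq> 0" "u2 (drop i w) \<noteq> 0"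
      by (auto elim: tmul_nonzeroE)
    then have "int (word_rank G lt s (take i w)) \<le> a" "int (word_rank G lt s (drop i w)) \<le> b"
      using 1(3) 2(3) unfolding u1_def u2_def by auto
    then show "int (word_rank G lt s w) \<le> a + b"
      using word_rank_append[of G lt s "take i w" "drop i w"] by simp
  qed
qed

lemma Fil_tmono:
  assumes "set u \<subseteq> edges G lt s" "int (word_rank G lt s u) \<le> m"
  shows "(tmono u :: ('v \<times> 'v) list \<Rightarrow> 'a::comm_ring_1) \<in> Fil G lt s m"
  by (rule FilI[OF in_TW_tmono[OF assms(1)] AI_zero]) (use assms in \<open>auto simp: tmono_def split: if_splits\<close>)

lemma amul_diff_left:
  "amul (\<lambda>m w. h1 m w - h2 m w) g m w = amul h1 g m w - (amul h2 g m w :: 'a::comm_ring_1)"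
  unfolding amul_def by (simp add: tmul_diff_left sum_subtractf)

lemma amul_diff_right:
  "amul g (\<lambda>m w. h1 m w - h2 m w) m w = amul g h1 m w - (amul g h2 m w :: 'a::comm_ring_1)"
  unfolding amul_def by (simp add: tmul_diff_right sum_subtractf)

lemma amul_sum_left:
  "amul (\<lambda>m w. \<Sum>i\<in>I. h i m w) g m w = (\<Sum>i\<in>I. amul (h i) g m w :: 'a::comm_ring_1)"
  unfolding amul_def tmul_def by (simp add: sum_distrib_right sum.swap[of _ I])

lemma amul_sum_right:
  "amul g (\<lambda>m w. \<Sum>i\<in>I. h i m w) m w = (\<Sum>i\<in>I. amul g (h i) m w :: 'a::comm_ring_1)"
  unfolding amul_def tmul_def by (simp add: sum_distrib_left sum.swap[of _ I])

lemma amul_if_left: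
  "amul (\<lambda>m w. if P then h m w else 0) g m w = (if P then amul h g m w else (0::'a::comm_ring_1))"
  by (simp add: amul_def tmul_def)

lemma amul_if_right:
  "amul g (\<lambda>m w. if P then h m w else 0) m w = (if P then amul g h m w else (0::'a::comm_ring_1))"
  by (simp add: amul_def tmul_def)

lemma amul_scalar_left:
  "amul (\<lambda>m w. a * h m w) g m w = a * (amul h g m w :: 'a::comm_ring_1)"
  unfolding amul_def tmul_def by (simp add: sum_distrib_left mult_ac)

lemma amul_scalar_right:
  "amul g (\<lambda>m w. a * h m w) m w = a * (amul g h m w :: 'a::comm_ring_1)"
  unfolding amul_def tmul_def by (simp add: sum_distrib_left mult_ac)

lemma amul_azero_left: "amul azero g m w = (0 :: 'a::comm_ring_1)"
  unfolding amul_def tmul_def azero_def by simp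

lemma amul_aone_right: "amul g aone m w = (g m w :: 'a::comm_ring_1)"
proof -
  have "amul g aone m w = (\<Sum>i\<le>m. if i = m then g m w else 0)"
    unfolding amul_def aone_def by (rule sum.cong) (auto simp: tmul_tmono_Nil_right tmul_zero_right)
  then show ?thesis by simp
qed

definition prefix_rank :: "nat \<Rightarrow> nat \<Rightarrow> nat" where
  "prefix_rank R j = (\<Sum>i<j. R - i)"

lemma sum_diff_add_sum:
  fixes S :: "nat set"
  assumes "finite S" "\<forall>i\<in>S. i \<le> R"
  shows "(\<Sum>i\<in>S. R - i) + \<Sum>S = card S * R"
proof -
  have "(\<Sum>i\<in>S. R - i) + \<Sum>S = (\<Sum>i\<in>S. (R - i) + i)" by (simp add: sum.distrib)
  also have "\<dots> = (\<Sum>i\<in>S. R)" using assms(2) by (intro sum.cong) auto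
  finally show ?thesis by simp
qed

lemma prefix_rank_closed_form:
  "j \<le> R \<Longrightarrow> j * R - j * (j - 1) div 2 = prefix_rank R j"
  using sum_diff_add_sum[of "{..<j}" R] Sum_Ico_nat[of 0 j]
  by (simp add: prefix_rank_def lessThan_atLeast0)

lemma prefix_rank_add: "prefix_rank R k + prefix_rank (R - k) k' = prefix_rank R (k + k')"
  by (induction k') (simp_all add: prefix_rank_def)

definition amono :: "nat \<Rightarrow> ('v \<times> 'v) list \<Rightarrow> ('v, 'a::comm_ring_1) Arep" where
  "amono d u = (\<lambda>m. if m = d then tmono u else (\<lambda>_. 0))"

lemma amul_amono_right:
  "amul g (amono d u) m w = (if d \<le> m then tmul (g (m - d)) (tmono u) w else (0::'a::comm_ring_1))"
proof -
  have "amul g (amono d u) m w =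
     (\<Sum>i\<le>m. if i = m - d then (if d \<le> m then tmul (g (m - d)) (tmono u) w else 0) else 0)"
    unfolding amul_def amono_def by (rule sum.cong) (auto simp: tmul_zero_right)
  then show ?thesis by simp
qed

lemma amul_amono_amono:
  fixes g :: "('v, 'a::comm_ring_1) Arep"
  shows "amul (amul g (amono d1 u)) (amono d2 v) m w = amul g (amono (d1 + d2) (u @ v)) m w"
proof (cases "d1 + d2 \<le> m")
  case True
  then have "amul g (amono d1 u) (m - d2) = tmul (g (m - (d1 + d2))) (tmono u)"
    by (intro ext) (auto simp: amul_amono_right add.commute)
  then show ?thesis using True by (simp add: amul_amono_right tmul_tmono_assoc)
next
  case False
  then have "amul g (amono d1 u) (m - d2) = (\<lambda>w. 0)" if "d2 \<le> m"
    using that by (intro ext) (auto simp: amul_amono_right)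
  then show ?thesis using False by (simp add: amul_amono_right tmul_zero_left)
qed

lemma fA_eq_amono:
  "fA G lt s dist b a =
     amono (prefix_rank (rk G lt s b) (rdist G lt s b a)) (dpath_edges dist b (rdist G lt s b a))"
  unfolding fA_def eprime_def amono_def
  by (subst prefix_rank_closed_form) (simp_all add: rdist_def)

section \<open>Ranks\<close>

lemma finite_strict_order_has_minimal:
  assumes "finite A" "a \<in> A" "\<forall>x\<in>A. \<not> r x x"
    "\<forall>x\<in>A. \<forall>y\<in>A. \<forall>z\<in>A. r x y \<longrightarrow> r y z \<longrightarrow> r x z"
  obtains m where "m \<in> A" "\<forall>z\<in>A. \<not> r z m"
proof -
  let ?R = "{(x, y). x \<in> A \<and> y \<in> A \<and> r x y}"
  have "trans ?R" using assms(4) unfolding trans_def by blast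
  then have "acyclic ?R" using assms(3) unfolding acyclic_def by (simp add: trancl_id)
  moreover have "finite ?R" by (rule finite_subset[of _ "A \<times> A"]) (auto simp: assms(1))
  ultimately have "wf ?R" by (rule finite_acyclic_wf[rotated])
  then show ?thesis using assms(2) by (rule wfE_min) (use that in blast)
qed

lemma exists_maxchain:
  assumes "finite S" "is_chain_in lt S D0"
  obtains D where "is_maxchain_in lt S D" "D0 \<subseteq> D"
proof -
  define F where "F = {D. is_chain_in lt S D \<and> D0 \<subseteq> D}"
  have "finite F" using assms(1) unfolding F_def is_chain_in_def
    by (rule finite_subset[rotated, OF finite_Pow_iff[THEN iffD2]]) auto
  moreover have "D0 \<in> F" using assms(2) unfolding F_def by auto
  ultimately have "Max (card ` F) \<in> card ` F" by (intro Max_in) auto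
  then obtain D where D: "D \<in> F" "card D = Max (card ` F)" by auto
  then have D_max: "card E \<le> card D" if "E \<in> F" for E
    using \<open>finite F\<close> that by simp
  have "E = D" if E: "is_chain_in lt S E" "D \<subseteq> E" for E
  proof -
    have "finite E" using E(1) assms(1) unfolding is_chain_in_def by (blast intro: finite_subset)
    moreover have "E \<in> F" using E D(1) unfolding F_def by auto
    ultimately show "E = D" using D_max E(2) by (metis card_seteq)
  qed
  then show ?thesis using D(1) that unfolding F_def is_maxchain_in_def by blast
qed

context
  fixes G :: "'v set" and lt :: "'v \<Rightarrow> 'v \<Rightarrow> bool" and s :: 'v
  assumes P: "finite_ranked_poset G lt s"
begin

lemma poset_finite: "finite G"
  using P unfolding finite_ranked_poset_def by auto

lemma poset_irrefl: "x \<in> G \<Longrightarrow> \<not> lt x x"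
  using P unfolding finite_ranked_poset_def by auto

lemma poset_trans:
  "x \<in> G \<Longrightarrow> y \<in> G \<Longrightarrow> z \<in> G \<Longrightarrow> lt x y \<Longrightarrow> lt y z \<Longrightarrow> lt x z"
  using P unfolding finite_ranked_poset_def by blast

lemma bottom_in: "s \<in> G"
  using P unfolding finite_ranked_poset_def by auto

lemma not_less_bottom: "y \<in> G \<Longrightarrow> \<not> lt y s"
  using P unfolding finite_ranked_poset_def by auto

lemma bottom_below:
  assumes "x \<in> G"
  shows "x = s \<or> lt s x"
proof -
  define M where "M = {z\<in>G. z = x \<or> lt z x}"
  obtain m where m: "m \<in> M" "\<forall>z\<in>M. \<not> lt z m"
  proof (rule finite_strict_order_has_minimal[of M x lt])
    show "finite M" using poset_finite unfolding M_def by simp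
    show "\<forall>a\<in>M. \<forall>b\<in>M. \<forall>c\<in>M. lt a b \<longrightarrow> lt b c \<longrightarrow> lt a c"
      unfolding M_def using poset_trans by blast
  qed (use assms poset_irrefl in \<open>auto simp: M_def\<close>)
  have "\<forall>y\<in>G. \<not> lt y m"
    using m assms poset_trans unfolding M_def by blast
  then have "m = s" using m(1) P unfolding M_def finite_ranked_poset_def by auto
  then show ?thesis using m(1) unfolding M_def by auto
qed

lemma interval_below_eq:
  "x \<in> G \<Longrightarrow> interval_below G lt s x = {z\<in>G. z = x \<or> lt z x}"
  unfolding interval_below_def using bottom_below by blast

lemma finite_interval_below: "finite (interval_below G lt s x)"
  unfolding interval_below_def using poset_finite by auto

lemma obtain_maxchain_below:
  obtains C where "is_maxchain_in lt (interval_below G lt s x) C"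
  using exists_maxchain[OF finite_interval_below[of x], of lt "{}"]
  unfolding is_chain_in_def by blast

lemma maxchain_finite: "is_maxchain_in lt (interval_below G lt s x) C \<Longrightarrow> finite C"
  unfolding is_maxchain_in_def is_chain_in_def using finite_interval_below finite_subset by blast

lemma maxchain_contains_top:
  assumes x: "x \<in> G" and C: "is_maxchain_in lt (interval_below G lt s x) C"
  shows "x \<in> C"
proof -
  have "is_chain_in lt (interval_below G lt s x) (insert x C)"
    using C x unfolding is_maxchain_in_def is_chain_in_def interval_below_eq[OF x] by blast
  then show ?thesis using C unfolding is_maxchain_in_def by blast
qed

lemma rk_card:
  assumes x: "x \<in> G" and C: "is_maxchain_in lt (interval_below G lt s x) C"
  shows "card C = Suc (rk G lt s x)"
proof -
  have "card C \<noteq> 0" using maxchain_contains_top[OF x C] maxchain_finite[OF C] by auto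
  then have "\<exists>n C'. is_maxchain_in lt (interval_below G lt s x) C' \<and> card C' = Suc n"
    using C not0_implies_Suc by blast
  then have "\<exists>C'. is_maxchain_in lt (interval_below G lt s x) C' \<and> card C' = Suc (rk G lt s x)"
    unfolding rk_def by (rule someI_ex)
  moreover have "\<forall>C'. is_maxchain_in lt (interval_below G lt s x) C' \<longrightarrow> card C = card C'"
    using P x C unfolding finite_ranked_poset_def by blast
  ultimately show ?thesis by auto
qed

lemma rk_bottom: "rk G lt s s = 0"
proof -
  have "interval_below G lt s s = {s}"
    unfolding interval_below_def using bottom_in not_less_bottom by auto
  then have "is_maxchain_in lt (interval_below G lt s s) {s}"
    unfolding is_maxchain_in_def is_chain_in_def by auto
  from rk_card[OF bottom_in this] show ?thesis by simp
qed

lemma insert_above_maxchain: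
  assumes a: "a \<in> G" and b: "b \<in> G" and ab: "lt a b"
    and C: "is_maxchain_in lt (interval_below G lt s a) C"
  shows "is_chain_in lt (interval_below G lt s b) (insert b C)" "b \<notin> C"
proof -
  have below: "\<forall>c\<in>C. c \<in> G \<and> lt c b"
    using C ab poset_trans[OF _ a b] unfolding is_maxchain_in_def is_chain_in_def interval_below_eq[OF a]
    by blast
  then show "is_chain_in lt (interval_below G lt s b) (insert b C)"
    using C b unfolding is_maxchain_in_def is_chain_in_def interval_below_eq[OF b] by blast
  show "b \<notin> C" using below b poset_irrefl by blast
qed

lemma rk_strict_mono:
  assumes a: "a \<in> G" and b: "b \<in> G" and ab: "lt a b"
  shows "rk G lt s a < rk G lt s b"
proof -
  obtain C where C: "is_maxchain_in lt (interval_below G lt s a) C"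
    by (rule obtain_maxchain_below)
  obtain D where D: "is_maxchain_in lt (interval_below G lt s b) D" "insert b C \<subseteq> D"
    using exists_maxchain[OF finite_interval_below insert_above_maxchain(1)[OF a b ab C]] by blast
  have "Suc (card C) \<le> card D"
    using card_mono[OF maxchain_finite[OF D(1)] D(2)] insert_above_maxchain(2)[OF a b ab C]
      maxchain_finite[OF C] by simp
  then show ?thesis using rk_card[OF a C] rk_card[OF b D(1)] by simp
qed

lemma rk_cover:
  assumes c: "c \<in> G" and b: "b \<in> G" and cb: "lt c b"
    and nothing_between: "\<And>z. z \<in> G \<Longrightarrow> lt c z \<Longrightarrow> \<not> lt z b"
  shows "rk G lt s b = Suc (rk G lt s c)"
proof -
  obtain C where C: "is_maxchain_in lt (interval_below G lt s c) C"
    by (rule obtain_maxchain_below)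
  note chain = insert_above_maxchain[OF c b cb C]
  have "is_maxchain_in lt (interval_below G lt s b) (insert b C)"
    unfolding is_maxchain_in_def
  proof (intro conjI allI impI)
    fix E assume E: "is_chain_in lt (interval_below G lt s b) E \<and> insert b C \<subseteq> E"
    have "e \<in> insert b C" if e: "e \<in> E" for e
    proof -
      have eG: "e \<in> G" "e = b \<or> lt e b"
        using E e unfolding is_chain_in_def interval_below_eq[OF b] by auto
      have "c \<in> E" using E maxchain_contains_top[OF c C] by auto
      then consider "e = b" | "e = c \<or> lt e c"
        using E e eG nothing_between unfolding is_chain_in_def by blast
      then show ?thesis
      proof cases
        case 2
        then have "is_chain_in lt (interval_below G lt s c) (insert e C)"
          using E e eG C unfolding is_maxchain_in_def is_chain_in_def interval_below_eq[OF c] by blast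
        then show ?thesis using C unfolding is_maxchain_in_def by blast
      qed simp
    qed
    then show "E = insert b C" using E by blast
  qed (use chain in simp)
  then have "card (insert b C) = Suc (rk G lt s b)" by (rule rk_card[OF b])
  then show ?thesis using rk_card[OF c C] chain(2) maxchain_finite[OF C] by simp
qed

lemma covers_rk: "covers G lt s x y \<Longrightarrow> rk G lt s x = Suc (rk G lt s y)"
  using rk_strict_mono unfolding covers_def rdist_def by fastforce

lemma rk_eq_0_imp_bottom: "x \<in> G \<Longrightarrow> rk G lt s x = 0 \<Longrightarrow> x = s"
  using bottom_below rk_strict_mono[OF bottom_in] by fastforce

lemma exists_cover_above:
  assumes a: "a \<in> G" and b: "b \<in> G" and ab: "lt a b"
  obtains c where "covers G lt s b c" "c = a \<or> lt a c"
proof -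
  define M where "M = {z\<in>G. (z = a \<or> lt a z) \<and> lt z b}"
  obtain c where c: "c \<in> M" "\<forall>z\<in>M. \<not> lt c z"
  proof (rule finite_strict_order_has_minimal[of M a "\<lambda>x y. lt y x"])
    show "finite M" using poset_finite unfolding M_def by simp
    show "\<forall>x\<in>M. \<forall>y\<in>M. \<forall>z\<in>M. lt y x \<longrightarrow> lt z y \<longrightarrow> lt z x"
      unfolding M_def using poset_trans by blast
  qed (use a ab poset_irrefl in \<open>auto simp: M_def\<close>)
  have "\<not> lt z b" if "z \<in> G" "lt c z" for z
    using c that a poset_trans unfolding M_def by blast
  then have "rk G lt s b = Suc (rk G lt s c)"
    using c(1) b unfolding M_def by (intro rk_cover) auto
  then have "covers G lt s b c" using c(1) b unfolding M_def covers_def rdist_def by auto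
  then show ?thesis using c(1) that unfolding M_def by blast
qed

end

context
  fixes G :: "'v set" and lt :: "'v \<Rightarrow> 'v \<Rightarrow> bool" and s :: 'v
  assumes P: "finite_ranked_poset G lt s"
begin

lemma is_path_nth_rk:
  assumes p: "is_path G lt s cs b a" and b: "b \<in> G" and i: "i < length cs"
  shows "cs ! i \<in> G \<and> rk G lt s (cs ! i) + i = rk G lt s b"
  using i
proof (induction i)
  case 0
  have "cs ! 0 = b" using p unfolding is_path_def by (metis hd_conv_nth)
  then show ?case using b by simp
next
  case (Suc i)
  then have "covers G lt s (cs ! i) (cs ! Suc i)" using p unfolding is_path_def by auto
  then show ?case using Suc covers_rk[OF P] unfolding covers_def by fastforce
qed

lemma is_path_rk:
  assumes p: "is_path G lt s cs b a" and b: "b \<in> G"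
  shows "rk G lt s a + (length cs - 1) = rk G lt s b" "a \<in> G"
proof -
  have "cs \<noteq> []" "cs ! (length cs - 1) = a" using p unfolding is_path_def by (auto simp: last_conv_nth)
  then show "rk G lt s a + (length cs - 1) = rk G lt s b" "a \<in> G"
    using is_path_nth_rk[OF p b, of "length cs - 1"] by auto
qed

lemma length_path_edges_rk:
  "is_path G lt s cs b a \<Longrightarrow> b \<in> G \<Longrightarrow> length (path_edges cs) = rk G lt s b - rk G lt s a"
  using is_path_rk by (fastforce simp: length_path_edges)

lemma path_edges_nth_rk:
  assumes "is_path G lt s cs b a" "b \<in> G" "i < length (path_edges cs)"
  shows "rk G lt s (fst (path_edges cs ! i)) + i = rk G lt s b"
  using assms is_path_nth_rk[OF assms(1,2), of i] by (simp add: length_path_edges nth_path_edges)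

lemma exists_path:
  assumes a: "a \<in> G" and b: "b \<in> G" and ab: "lt a b"
  obtains cs where "is_path G lt s cs b a"
  using b ab
proof (induction "rk G lt s b - rk G lt s a" arbitrary: b thesis rule: less_induct)
  case less
  obtain c where c: "covers G lt s b c" "c = a \<or> lt a c"
    using exists_cover_above[OF P a less.prems(2,3)] by blast
  show ?case
  proof (cases "c = a")
    case True
    have "is_path G lt s [a] a a" unfolding is_path_def by simp
    then show ?thesis using is_path_Cons[OF c(1)] True less.prems(1) by blast
  next
    case False
    then have "lt a c" "c \<in> G" using c unfolding covers_def by auto
    moreover have "rk G lt s c - rk G lt s a < rk G lt s b - rk G lt s a"
      using rk_strict_mono[OF P a \<open>c \<in> G\<close> \<open>lt a c\<close>] covers_rk[OF P c(1)] by simp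
    ultimately obtain cs where "is_path G lt s cs c a"
      using less.hyps by blast
    then show ?thesis using is_path_Cons[OF c(1)] less.prems(1) by blast
  qed
qed

end

definition dpath :: "('v \<Rightarrow> 'v) \<Rightarrow> 'v \<Rightarrow> nat \<Rightarrow> 'v list" where
  "dpath dist x N = map (\<lambda>i. (dist ^^ i) x) [0..<Suc N]"

lemma path_edges_dpath: "path_edges (dpath dist x N) = dpath_edges dist x N"
  by (rule nth_equalityI)
    (simp_all add: length_path_edges dpath_def dpath_edges_def nth_path_edges del: upt_Suc)

lemma take_dpath_edges:
  "j \<le> N \<Longrightarrow> take j (dpath_edges dist x N) = dpath_edges dist x j"
  unfolding dpath_edges_def by (simp add: take_map min_def)

context
  fixes G :: "'v set" and lt :: "'v \<Rightarrow> 'v \<Rightarrow> bool" and s :: 'v and dist :: "'v \<Rightarrow> 'v"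
  assumes P: "finite_ranked_poset G lt s"
    and D: "\<forall>y\<in>G - {s}. covers G lt s y (dist y)"
begin

lemma funpow_dist_rk:
  assumes x: "x \<in> G" and i: "i \<le> rk G lt s x"
  shows "(dist ^^ i) x \<in> G \<and> rk G lt s ((dist ^^ i) x) + i = rk G lt s x"
  using i
proof (induction i)
  case (Suc i)
  then have "(dist ^^ i) x \<in> G - {s}" using rk_bottom[OF P] by auto
  then have "covers G lt s ((dist ^^ i) x) (dist ((dist ^^ i) x))" using D by blast
  then show ?case using Suc covers_rk[OF P] unfolding covers_def by fastforce
qed (use x in simp)

lemma funpow_dist_rk_bottom: "x \<in> G \<Longrightarrow> (dist ^^ rk G lt s x) x = s"
  using funpow_dist_rk[of x "rk G lt s x"] rk_eq_0_imp_bottom[OF P] by simp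

lemma is_path_dpath:
  assumes x: "x \<in> G" and N: "N \<le> rk G lt s x"
  shows "is_path G lt s (dpath dist x N) x ((dist ^^ N) x)"
  unfolding is_path_def
proof (intro conjI allI impI)
  fix i assume "Suc i < length (dpath dist x N)"
  then have i: "i < N" unfolding dpath_def by simp
  then have "(dist ^^ i) x \<in> G - {s}"
    using funpow_dist_rk[OF x, of i] N rk_bottom[OF P] by auto
  then show "covers G lt s (dpath dist x N ! i) (dpath dist x N ! Suc i)"
    using D i unfolding dpath_def by (simp del: upt_Suc)
qed (simp_all add: dpath_def hd_map last_map del: upt_Suc)

end

section \<open>Top-degree parts of the relations\<close>

lemma sum_nat_set_ge_triangular:
  fixes S :: "nat set"
  assumes "finite S"
  shows "(\<Sum>i<card S. i) \<le> \<Sum>S \<and> (\<Sum>S = (\<Sum>i<card S. i) \<longrightarrow> S = {..<card S})"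
  using assms
proof (induction "card S" arbitrary: S)
  case (Suc n)
  define M where "M = Max S"
  have "S \<noteq> {}" using Suc.hyps(2) by auto
  then have M: "M \<in> S" "S \<subseteq> {..M}" unfolding M_def using Suc.prems by auto
  define S' where "S' = S - {M}"
  have S': "finite S'" "card S' = n" unfolding S'_def using Suc M by auto
  with Suc.hyps(1) have IH: "(\<Sum>i<n. i) \<le> \<Sum>S' \<and> (\<Sum>S' = (\<Sum>i<n. i) \<longrightarrow> S' = {..<n})"
    by blast
  have sum_S: "\<Sum>S = M + \<Sum>S'" unfolding S'_def using M Suc.prems by (simp add: sum.remove)
  have "n \<le> M" using card_mono[OF _ M(2)] Suc.hyps(2) by simp
  moreover have "S = {..<Suc n}" if "\<Sum>S = (\<Sum>i<Suc n. i)"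
  proof -
    have "M = n" "S' = {..<n}" using that sum_S IH \<open>n \<le> M\<close> by auto
    then show ?thesis unfolding S'_def using M(1) by (auto simp: lessThan_Suc)
  qed
  ultimately show ?case using sum_S IH Suc.hyps(2)[symmetric] by simp
qed simp

lemma sum_list_map_nths:
  "sum_list (map f (nths xs S)) = (\<Sum>i<length xs. if i \<in> S then f (xs ! i) else (0::'b::comm_monoid_add))"
proof (induction xs arbitrary: S)
  case (Cons x xs)
  then show ?case
    by (simp add: nths_Cons sum.lessThan_Suc_shift cong: if_cong del: sum.lessThan_Suc)
qed simp

context
  fixes G :: "'v set" and lt :: "'v \<Rightarrow> 'v \<Rightarrow> bool" and s :: 'v
  assumes P: "finite_ranked_poset G lt s"
begin

lemma word_rank_nths_path_edges:
  assumes p: "is_path G lt s cs b a" and b: "b \<in> G" and S: "S \<subseteq> {..<length (path_edges cs)}"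
  shows "word_rank G lt s (nths (path_edges cs) S) = (\<Sum>i\<in>S. rk G lt s b - i)"
proof -
  let ?es = "path_edges cs"
  have "rk G lt s (fst (?es ! i)) = rk G lt s b - i" if "i < length ?es" for i
    using path_edges_nth_rk[OF P p b that] by (metis add_diff_cancel_right')
  then have "word_rank G lt s (nths ?es S) = (\<Sum>i<length ?es. if i \<in> S then rk G lt s b - i else 0)"
    unfolding word_rank_def sum_list_map_nths by (intro sum.cong) auto
  also have "\<dots> = (\<Sum>i\<in>S. rk G lt s b - i)"
    using S by (simp add: sum.inter_restrict[symmetric] Int_absorb1)
  finally show ?thesis .
qed

lemma word_rank_take_path_edges:
  "is_path G lt s cs b a \<Longrightarrow> b \<in> G \<Longrightarrow> j \<le> length (path_edges cs) \<Longrightarrow>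
    word_rank G lt s (take j (path_edges cs)) = prefix_rank (rk G lt s b) j"
  using word_rank_nths_path_edges[of cs b a "{..<j}"] unfolding prefix_rank_def by simp

text \<open>Among the words \<open>nths es S\<close> with \<open>card S = j\<close>, the prefix of length \<open>j\<close> is the unique one
  of maximal rank, since ranks strictly decrease along a path.\<close>

lemma esym_top_degree:
  assumes p: "is_path G lt s cs b a" and b: "b \<in> G" and j: "j \<le> length (path_edges cs)"
    and w: "prefix_rank (rk G lt s b) j \<le> word_rank G lt s w"
  shows "(esym (path_edges cs) j w :: 'a::comm_ring_1) = (-1) ^ j * tmono (take j (path_edges cs)) w"
proof -
  let ?es = "path_edges cs"
  let ?R = "rk G lt s b"
  have LR: "length ?es \<le> ?R" using is_path_rk[OF P p b] by (simp add: length_path_edges)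
  have initial: "S = {..<j}" if S: "S \<subseteq> {..<length ?es}" "card S = j" "nths ?es S = w" for S
  proof -
    have "finite S" using S(1) finite_subset by blast
    moreover have "(\<Sum>i\<in>S. ?R - i) + \<Sum>S = j * ?R"
      using sum_diff_add_sum[of S ?R] S(1,2) LR \<open>finite S\<close> by force
    moreover have "prefix_rank ?R j + (\<Sum>i<j. i) = j * ?R"
      using sum_diff_add_sum[of "{..<j}" ?R] j LR unfolding prefix_rank_def by auto
    moreover have "prefix_rank ?R j \<le> (\<Sum>i\<in>S. ?R - i)"
      using w word_rank_nths_path_edges[OF p b S(1)] S(3) by simp
    ultimately show ?thesis using sum_nat_set_ge_triangular[of S] S(2) by auto
  qed
  show ?thesis
  proof (cases "w = take j ?es")
    case True
    then have "{S. S \<subseteq> {..<length ?es} \<and> card S = j \<and> nths ?es S = w} = {{..<j}}"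
      using initial j by auto
    then show ?thesis using True unfolding esym_def tmono_def by simp
  next
    case False
    have none: "{S. S \<subseteq> {..<length ?es} \<and> card S = j \<and> nths ?es S = w} = {}"
    proof (rule equals0I)
      fix S assume "S \<in> {S. S \<subseteq> {..<length ?es} \<and> card S = j \<and> nths ?es S = w}"
      then have "S = {..<j}" "nths ?es S = w" using initial by auto
      then show False using False by simp
    qed
    show ?thesis unfolding esym_def tmono_def none using False by simp
  qed
qed

lemma path_prefixes_congruent:
  assumes p1: "is_path G lt s cs1 b a" and p2: "is_path G lt s cs2 b a" and b: "b \<in> G"
    and ab: "lt a b" and j: "j \<le> rk G lt s b - rk G lt s a"
  shows "(\<lambda>w. tmono (take j (path_edges cs1)) w - tmono (take j (path_edges cs2)) w
      :: 'a::comm_ring_1) \<in> Fil G lt s (int (prefix_rank (rk G lt s b) j) - 1)"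
proof -
  define r :: "('v \<times> 'v) list \<Rightarrow> 'a" where
    "r = (\<lambda>w. esym (path_edges cs1) j w - esym (path_edges cs2) j w)"
  have "r \<in> rels G lt s"
    unfolding rels_def r_def rdist_def using is_path_rk(2)[OF P p1 b] b ab p1 p2 j by blast
  then have y: "(\<lambda>w. (-1) ^ j * r w) \<in> AI G lt s"
    unfolding AI_def by (intro AI_scalar_mult[unfolded AI_def] two_sided_ideal.gen)
  have "set (take j (path_edges cs1)) \<subseteq> edges G lt s" "set (take j (path_edges cs2)) \<subseteq> edges G lt s"
    using set_path_edges[OF p1] set_path_edges[OF p2] set_take_subset by fast+
  note in_TW = in_TW_diff[OF in_TW_tmono[OF this(1)] in_TW_tmono[OF this(2)]]
  show ?thesis
  proof (rule FilI[OF in_TW y])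
    fix w
    assume "tmono (take j (path_edges cs1)) w - tmono (take j (path_edges cs2)) w - (-1) ^ j * r w \<noteq> (0::'a)"
    moreover have "(-1) ^ j * r w = tmono (take j (path_edges cs1)) w - tmono (take j (path_edges cs2)) w"
      if "prefix_rank (rk G lt s b) j \<le> word_rank G lt s w"
    proof -
      have "(esym (path_edges cs1) j w :: 'a) = (-1) ^ j * tmono (take j (path_edges cs1)) w"
        "(esym (path_edges cs2) j w :: 'a) = (-1) ^ j * tmono (take j (path_edges cs2)) w"
        using esym_top_degree[OF p1 b _ that] esym_top_degree[OF p2 b _ that] j
          length_path_edges_rk[OF P p1 b] length_path_edges_rk[OF P p2 b] by simp_all
      then show ?thesis unfolding r_def by (simp add: right_diff_distrib)
    qed
    ultimately show "int (word_rank G lt s w) \<le> int (prefix_rank (rk G lt s b) j) - 1"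
      by (cases "prefix_rank (rk G lt s b) j \<le> word_rank G lt s w") auto
  qed
qed

end

context
  fixes G :: "'v set" and lt :: "'v \<Rightarrow> 'v \<Rightarrow> bool" and s :: 'v and dist :: "'v \<Rightarrow> 'v"
  assumes P: "finite_ranked_poset G lt s"
    and D: "\<forall>y\<in>G - {s}. covers G lt s y (dist y)"
begin

lemma is_path_dpath_bottom:
  "x \<in> G \<Longrightarrow> is_path G lt s (dpath dist x (rk G lt s x)) x s"
  using is_path_dpath[OF P D, of x "rk G lt s x"] funpow_dist_rk_bottom[OF P D] by simp

lemma tmono_dpath_edges_in_Fil:
  assumes x: "x \<in> G" and k: "k \<le> rk G lt s x"
  shows "(tmono (dpath_edges dist x k) :: _ \<Rightarrow> 'a::comm_ring_1)
    \<in> Fil G lt s (int (prefix_rank (rk G lt s x) k))"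
proof (rule Fil_tmono)
  note p = is_path_dpath[OF P D x k]
  show "set (dpath_edges dist x k) \<subseteq> edges G lt s"
    using set_path_edges[OF p] by (simp add: path_edges_dpath)
  show "int (word_rank G lt s (dpath_edges dist x k)) \<le> int (prefix_rank (rk G lt s x) k)"
    using word_rank_take_path_edges[OF P p x, of k] by (simp add: path_edges_dpath dpath_edges_def)
qed

text \<open>The distinguished path from \<open>b\<close> and a path running from \<open>b\<close> to \<open>b'\<close> and then along the
  distinguished path from \<open>b'\<close> have congruent prefixes of lengths \<open>k\<close> and \<open>k + k'\<close>; multiply the
  first congruence by the remaining \<open>k'\<close> edges.\<close>

lemma dpath_edges_append_congruent:
  assumes b: "b \<in> G" and b': "b' \<in> G" and b'b: "lt b' b" and k': "k' \<le> rk G lt s b'"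
  defines "k \<equiv> rk G lt s b - rk G lt s b'"
  shows "(\<lambda>w. tmono (dpath_edges dist b k @ dpath_edges dist b' k') w - tmono (dpath_edges dist b (k + k')) w
      :: 'a::comm_ring_1) \<in> Fil G lt s (int (prefix_rank (rk G lt s b) (k + k')) - 1)"
proof -
  let ?R = "rk G lt s b" and ?r = "rk G lt s b'"
  have "?r < ?R" by (rule rk_strict_mono[OF P b' b b'b])
  have "lt s b" using bottom_below[OF P b] not_less_bottom[OF P b'] b'b by auto
  obtain \<sigma> where \<sigma>: "is_path G lt s \<sigma> b b'" using exists_path[OF P b' b b'b] .
  have len_\<sigma>: "length (path_edges \<sigma>) = k" unfolding k_def by (rule length_path_edges_rk[OF P \<sigma> b])
  note \<pi> = is_path_dpath_bottom[OF b] and \<pi>' = is_path_dpath_bottom[OF b']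
  have edges_\<sigma>\<pi>': "path_edges (\<sigma> @ tl (dpath dist b' ?r)) = path_edges \<sigma> @ dpath_edges dist b' ?r"
    using is_path_append(2)[OF \<sigma> \<pi>'] by (simp add: path_edges_dpath)
  have congruent: "(\<lambda>w. tmono (dpath_edges dist b j) w
      - tmono (take j (path_edges \<sigma> @ dpath_edges dist b' ?r)) w :: 'a) \<in> Fil G lt s (int (prefix_rank ?R j) - 1)" if "j \<le> ?R" for j
    using path_prefixes_congruent[OF P \<pi> is_path_append(1)[OF \<sigma> \<pi>'] b \<open>lt s b\<close>, of j] that
    by (simp add: path_edges_dpath take_dpath_edges edges_\<sigma>\<pi>' rk_bottom[OF P])
  have "tmul (\<lambda>w. tmono (dpath_edges dist b k) w - tmono (path_edges \<sigma>) w :: 'a)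
      (tmono (dpath_edges dist b' k')) \<in> Fil G lt s (int (prefix_rank ?R k) - 1 + int (prefix_rank ?r k'))"
    using Fil_tmul[OF congruent[of k] tmono_dpath_edges_in_Fil[OF b' k']] len_\<sigma> k_def by simp
  moreover have "int (prefix_rank ?R k) - 1 + int (prefix_rank ?r k') = int (prefix_rank ?R (k + k')) - 1"
    using prefix_rank_add[of ?R k k'] \<open>?r < ?R\<close> unfolding k_def by simp
  moreover have "tmul (\<lambda>w. tmono (dpath_edges dist b k) w - tmono (path_edges \<sigma>) w :: 'a)
      (tmono (dpath_edges dist b' k')) = (\<lambda>w. tmono (dpath_edges dist b k @ dpath_edges dist b' k') w
      - tmono (path_edges \<sigma> @ dpath_edges dist b' k') w)"
    by (rule ext) (simp add: tmul_diff_left tmul_tmono_tmono)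
  ultimately have "(\<lambda>w. tmono (dpath_edges dist b k @ dpath_edges dist b' k') w
      - tmono (path_edges \<sigma> @ dpath_edges dist b' k') w :: 'a) \<in> Fil G lt s (int (prefix_rank ?R (k + k')) - 1)"
    by simp
  from Fil_diff[OF this congruent[of "k + k'"]] show ?thesis
    using len_\<sigma> k' \<open>?r < ?R\<close> unfolding k_def by (simp add: take_dpath_edges)
qed

lemma fA_mult_congruent:
  fixes g :: "('v, 'a::comm_ring_1) Arep"
  assumes b: "b \<in> G" and b': "b' \<in> G" and b'': "b'' \<in> G" and b'b: "lt b' b" and b''b': "lt b'' b'"
    and g: "\<forall>i. g i \<in> Fil G lt s (int i)"
  shows "(\<lambda>w. amul (amul g (fA G lt s dist b b')) (fA G lt s dist b' b'') m w
      - amul g (fA G lt s dist b b'') m w) \<in> Fil G lt s (int m - 1)"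
proof -
  let ?R = "rk G lt s b" and ?r' = "rk G lt s b'" and ?r'' = "rk G lt s b''"
  define k where "k = ?R - ?r'"
  define k' where "k' = ?r' - ?r''"
  define d where "d = prefix_rank ?R (k + k')"
  have "?r' < ?R" "?r'' < ?r'" using rk_strict_mono[OF P] b b' b'' b'b b''b' by blast+
  then have dists: "rdist G lt s b b' = k" "rdist G lt s b' b'' = k'" "rdist G lt s b b'' = k + k'"
    and "k' \<le> ?r'"
    unfolding rdist_def k_def k'_def by auto
  have "prefix_rank ?R k + prefix_rank ?r' k' = d"
    unfolding d_def using prefix_rank_add[of ?R k k'] \<open>?r' < ?R\<close> k_def by simp
  then have "amul (amul g (fA G lt s dist b b')) (fA G lt s dist b' b'') m w
      - amul g (fA G lt s dist b b'') m w =
      (if d \<le> m then tmul (g (m - d)) (\<lambda>w. tmono (dpath_edges dist b k @ dpath_edges dist b' k') w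
        - tmono (dpath_edges dist b (k + k')) w) w else 0)" for w
    unfolding fA_eq_amono amul_amono_amono dists d_def[symmetric]
    by (simp add: amul_amono_right tmul_diff_right)
  moreover have "tmul (g (m - d)) (\<lambda>w. tmono (dpath_edges dist b k @ dpath_edges dist b' k') w
      - tmono (dpath_edges dist b (k + k')) w) \<in> Fil G lt s (int (m - d) + (int d - 1))"
    using Fil_tmul[OF g[rule_format] dpath_edges_append_congruent[OF b b' b'b \<open>k' \<le> ?r'\<close>]] dists(3)
    unfolding d_def k_def by simp
  ultimately show ?thesis by (cases "d \<le> m") (simp_all add: Fil_zero of_nat_diff)
qed

end

section \<open>The square of d\<close>

lemma del_at_Nil [simp]: "del_at i [] = []"
  unfolding del_at_def by simp

lemma del_at_Cons_0 [simp]: "del_at 0 (x # xs) = xs"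
  unfolding del_at_def by simp

lemma del_at_Cons_Suc [simp]: "del_at (Suc i) (x # xs) = x # del_at i xs"
  unfolding del_at_def by simp

lemma length_del_at: "i < length xs \<Longrightarrow> length (del_at i xs) = length xs - 1"
  unfolding del_at_def by simp

lemma del_at_del_at_commute:
  "i \<le> j \<Longrightarrow> del_at i (del_at (Suc j) xs) = del_at j (del_at i xs)"
proof (induction xs arbitrary: i j)
  case (Cons x xs)
  then show ?case by (cases i; cases j) auto
qed simp

text \<open>The simplicial identity behind \<open>\<delta> \<circ> \<delta> = 0\<close>: the terms \<open>(i, j)\<close> with \<open>i \<le> j\<close>
  cancel against the terms \<open>(j + 1, i)\<close>.\<close>

lemma alternating_double_deletion_sum:
  fixes \<Phi> :: "'x list \<Rightarrow> 'a::comm_ring_1"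
  shows "(\<Sum>i<length cs. \<Sum>j<length cs - 1. (-1) ^ i * ((-1) ^ j * \<Phi> (del_at j (del_at i cs)))) = 0"
proof -
  define L where "L = length cs"
  define F where "F = (\<lambda>(i, j). (-1) ^ i * ((-1) ^ j * \<Phi> (del_at j (del_at i cs))))"
  define Q1 where "Q1 = {(i, j). i < L \<and> j < L - 1 \<and> i \<le> j}"
  define Q2 where "Q2 = {(i, j). i < L \<and> j < L - 1 \<and> j < i}"
  have fin: "finite Q1" "finite Q2"
    unfolding Q1_def Q2_def by (rule finite_subset[of _ "{..<L} \<times> {..<L - 1}"], auto)+
  have "(\<Sum>i<L. \<Sum>j<L - 1. (-1) ^ i * ((-1) ^ j * \<Phi> (del_at j (del_at i cs))))
      = (\<Sum>p\<in>Q1 \<union> Q2. F p)"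
    unfolding F_def sum.cartesian_product by (rule sum.cong) (auto simp: Q1_def Q2_def)
  also have "\<dots> = (\<Sum>p\<in>Q1. F p) + (\<Sum>p\<in>Q2. F p)"
    by (rule sum.union_disjoint) (use fin in \<open>auto simp: Q1_def Q2_def\<close>)
  also have "(\<Sum>p\<in>Q2. F p) = (\<Sum>p\<in>Q1. F ((\<lambda>(i, j). (Suc j, i)) p))"
  proof (rule sum.reindex_bij_betw[symmetric])
    show "bij_betw (\<lambda>(i, j). (Suc j, i)) Q1 Q2"
      by (rule bij_betw_byWitness[where f' = "\<lambda>(i, j). (j, i - 1)"]) (auto simp: Q1_def Q2_def)
  qed
  also have "\<dots> = (\<Sum>p\<in>Q1. - F p)"
    by (rule sum.cong) (auto simp: F_def Q1_def del_at_del_at_commute)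
  finally show ?thesis unfolding L_def by (simp add: sum_negf)
qed

lemma amul_dcoef:
  fixes g :: "('v, 'a::comm_ring_1) Arep"
  shows "amul g (dcoef G lt s dist (b, q, cs) c') m w =
     (if c' = (hd cs, q - rdist G lt s b (hd cs), tl cs) then amul g (fA G lt s dist b (hd cs)) m w else 0)
     - (\<Sum>i<length cs. if c' = (b, q, del_at i cs) then (-1) ^ i * g m w else 0)"
proof -
  have "dcoef G lt s dist (b, q, cs) c' = (\<lambda>m w.
     (if c' = (hd cs, q - rdist G lt s b (hd cs), tl cs) then fA G lt s dist b (hd cs) m w else 0)
     - (\<Sum>i<length cs. if c' = (b, q, del_at i cs) then (-1) ^ i * aone m w else (0::'a)))"
    unfolding dcoef_def aadd_def azero_def
    by (intro ext) (simp add: sum_negf[symmetric] if_distrib cong: if_cong)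
  then show ?thesis
    by (simp add: amul_diff_right amul_if_right amul_sum_right amul_scalar_right amul_aone_right
        cong: if_cong)
qed

definition d_support ::
    "'v set \<Rightarrow> ('v \<Rightarrow> 'v \<Rightarrow> bool) \<Rightarrow> 'v \<Rightarrow> 'v \<times> nat \<times> 'v list \<Rightarrow> ('v \<times> nat \<times> 'v list) set" where
  "d_support G lt s c = (case c of (b, q, cs) \<Rightarrow>
     insert (hd cs, q - rdist G lt s b (hd cs), tl cs) ((\<lambda>i. (b, q, del_at i cs)) ` {..<length cs}))"

lemma finite_d_support: "finite (d_support G lt s c)"
  unfolding d_support_def by (cases c) auto

lemma amul_dcoef_notin_d_support:
  "c' \<notin> d_support G lt s c \<Longrightarrow> amul g (dcoef G lt s dist c c') m w = (0::'a::comm_ring_1)"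
  by (cases c) (auto simp: d_support_def amul_dcoef intro!: sum.neutral)

lemma sum_amul_dcoef_left:
  fixes g :: "('v, 'a::comm_ring_1) Arep" and H :: "'v \<times> nat \<times> 'v list \<Rightarrow> ('v, 'a) Arep"
  assumes T: "finite T" "d_support G lt s (b, q, cs) \<subseteq> T"
  shows "(\<Sum>c\<in>T. amul (amul g (dcoef G lt s dist (b, q, cs) c)) (H c) m w) =
    amul (amul g (fA G lt s dist b (hd cs))) (H (hd cs, q - rdist G lt s b (hd cs), tl cs)) m w
    - (\<Sum>i<length cs. (-1) ^ i * amul g (H (b, q, del_at i cs)) m w)"
proof -
  define t0 where "t0 = (hd cs, q - rdist G lt s b (hd cs), tl cs)"
  define F where "F = amul g (fA G lt s dist b (hd cs))"
  have "amul g (dcoef G lt s dist (b, q, cs) c) = (\<lambda>m w. (if c = t0 then F m w else 0)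
      - (\<Sum>i<length cs. if c = (b, q, del_at i cs) then (-1) ^ i * g m w else 0))" for c
    unfolding t0_def F_def by (intro ext) (simp add: amul_dcoef)
  then have "amul (amul g (dcoef G lt s dist (b, q, cs) c)) (H c) m w =
      (if c = t0 then amul F (H c) m w else 0)
      - (\<Sum>i<length cs. if c = (b, q, del_at i cs) then (-1) ^ i * amul g (H c) m w else 0)" for c
    by (simp add: amul_diff_left amul_if_left amul_sum_left amul_scalar_left cong: if_cong)
  then have "(\<Sum>c\<in>T. amul (amul g (dcoef G lt s dist (b, q, cs) c)) (H c) m w) =
      (\<Sum>c\<in>T. if c = t0 then amul F (H c) m w else 0)
      - (\<Sum>i<length cs. \<Sum>c\<in>T. if c = (b, q, del_at i cs) then (-1) ^ i * amul g (H c) m w else 0)"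
    by (simp add: sum_subtractf sum.swap[of _ T])
  also have "\<dots> = amul F (H t0) m w - (\<Sum>i<length cs. (-1) ^ i * amul g (H (b, q, del_at i cs)) m w)"
    using T unfolding d_support_def t0_def by (auto simp: sum.delta intro!: sum.cong)
  finally show ?thesis unfolding t0_def F_def .
qed

lemma amul_dcoef_dcoef:
  fixes g :: "('v, 'a::comm_ring_1) Arep"
  assumes T: "finite T" "d_support G lt s (b, q, b1 # b0 # rest) \<subseteq> T"
    and q: "q - rdist G lt s b b1 - rdist G lt s b1 b0 = q - rdist G lt s b b0"
  shows "(\<Sum>c\<in>T. amul (amul g (dcoef G lt s dist (b, q, b1 # b0 # rest) c)) (dcoef G lt s dist c c') m w) =
    (if c' = (b0, q - rdist G lt s b b0, rest)
     then amul (amul g (fA G lt s dist b b1)) (fA G lt s dist b1 b0) m w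
       - amul g (fA G lt s dist b b0) m w else 0)"
proof -
  define cs where "cs = b1 # b0 # rest"
  define q1 where "q1 = q - rdist G lt s b b1"
  define F where "F = amul g (fA G lt s dist b b1)"
  define twice_b0 where "twice_b0 =
    (if c' = (b0, q - rdist G lt s b b0, rest) then amul F (fA G lt s dist b1 b0) m w else 0)"
  define face_b0 where "face_b0 =
    (if c' = (b0, q - rdist G lt s b b0, rest) then amul g (fA G lt s dist b b0) m w else 0)"
  define mixed where "mixed = (\<lambda>i. if c' = (b1, q1, del_at i (b0 # rest)) then F m w else 0)"
  define \<Phi> where "\<Phi> = (\<lambda>l. if c' = (b, q, l) then g m w else 0)"
  have mult_if: "a * (if P then X else 0) = (if P then a * X else 0)" for a X :: 'a and P
    by simp
  \<comment> \<open>\<open>twice_b0\<close> comes from applying \<open>f\<close> twice, \<open>face_b0\<close> from deleting \<open>b1\<close> and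
    then applying \<open>f\<close>; the \<open>mixed\<close> terms (one \<open>f\<close>-step, one deletion) cancel in pairs.\<close>
  have f_first: "amul F (dcoef G lt s dist (b1, q1, b0 # rest) c') m w =
      twice_b0 - (\<Sum>j<length cs - 1. (-1) ^ j * mixed j)"
    unfolding amul_dcoef twice_b0_def mixed_def q1_def cs_def using q
    by (simp add: mult_if cong: if_cong)
  have face_first: "amul g (dcoef G lt s dist (b, q, del_at i cs) c') m w =
      (if i = 0 then face_b0 else mixed (i - 1))
      - (\<Sum>j<length cs - 1. (-1) ^ j * \<Phi> (del_at j (del_at i cs)))" if "i < length cs" for i
    using that length_del_at[OF that]
    unfolding amul_dcoef face_b0_def mixed_def \<Phi>_def F_def q1_def cs_def
    by (cases i) (simp_all add: mult_if cong: if_cong)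
  have "(\<Sum>i<length cs. (-1) ^ i * amul g (dcoef G lt s dist (b, q, del_at i cs) c') m w) =
      (\<Sum>i<length cs. (-1) ^ i * (if i = 0 then face_b0 else mixed (i - 1)))
      - (\<Sum>i<length cs. \<Sum>j<length cs - 1. (-1) ^ i * ((-1) ^ j * \<Phi> (del_at j (del_at i cs))))"
    by (simp add: face_first right_diff_distrib sum_subtractf sum_distrib_left)
  also have "\<dots> = face_b0 - (\<Sum>j<length cs - 1. (-1) ^ j * mixed j)"
    unfolding alternating_double_deletion_sum
    by (simp add: cs_def sum.lessThan_Suc_shift sum_negf del: sum.lessThan_Suc)
  finally show ?thesis
    using sum_amul_dcoef_left[OF T, where H = "\<lambda>c. dcoef G lt s dist c c'" and g = g] f_first q
    unfolding cs_def twice_b0_def face_b0_def F_def q1_def by simp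
qed

lemma Aeq_azero_iff:
  "Aeq G lt s g azero \<longleftrightarrow> (\<forall>m. g m \<in> Fil G lt s (int m - 1))"
  by (simp add: Aeq_def azero_def)

lemma Dmap_Dmap_eq_sum:
  fixes x :: "'v \<times> nat \<times> 'v list \<Rightarrow> ('v, 'a::comm_ring_1) Arep"
  assumes X: "finite {c. x c \<noteq> azero}"
    and T: "finite T" "\<And>c. x c \<noteq> azero \<Longrightarrow> d_support G lt s c \<subseteq> T"
  shows "Dmap G lt s dist (Dmap G lt s dist x) c' m w =
    (\<Sum>c | x c \<noteq> azero. \<Sum>c2\<in>T. amul (amul (x c) (dcoef G lt s dist c c2)) (dcoef G lt s dist c2 c') m w)"
proof -
  let ?y = "Dmap G lt s dist x"
  have "?y c2 = azero" if "c2 \<notin> T" for c2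
    using T(2) that unfolding Dmap_def azero_def
    by (intro ext) (auto intro!: sum.neutral amul_dcoef_notin_d_support)
  then have "{c2. ?y c2 \<noteq> azero} \<subseteq> T" by blast
  then have "Dmap G lt s dist ?y c' m w = (\<Sum>c2\<in>T. amul (?y c2) (dcoef G lt s dist c2 c') m w)"
    unfolding Dmap_def
    by (intro sum.mono_neutral_left[OF T(1)]) (auto simp: amul_azero_left)
  also have "\<dots> = (\<Sum>c2\<in>T. \<Sum>c | x c \<noteq> azero.
      amul (amul (x c) (dcoef G lt s dist c c2)) (dcoef G lt s dist c2 c') m w)"
    unfolding Dmap_def by (simp add: amul_sum_left)
  finally show ?thesis by (simp add: sum.swap[of _ T])
qed

context
  fixes G :: "'v set" and lt :: "'v \<Rightarrow> 'v \<Rightarrow> bool" and s :: 'v and dist :: "'v \<Rightarrow> 'v"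
  assumes P: "finite_ranked_poset G lt s"
    and D: "\<forall>y\<in>G - {s}. covers G lt s y (dist y)"
begin

lemma dd_basis_chain_in_Fil:
  fixes g :: "('v, 'a::comm_ring_1) Arep"
  assumes c: "is_basis_chain G lt s c" "2 \<le> length (snd (snd c))"
    and g: "\<forall>i. g i \<in> Fil G lt s (int i)"
    and T: "finite T" "d_support G lt s c \<subseteq> T"
  shows "(\<lambda>w. \<Sum>c2\<in>T. amul (amul g (dcoef G lt s dist c c2)) (dcoef G lt s dist c2 c') m w)
    \<in> Fil G lt s (int m - 1)"
proof -
  obtain b q cs where "c = (b, q, cs)" by (cases c)
  moreover obtain b1 b0 rest where "cs = b1 # b0 # rest"
    using c(2) calculation by (cases cs; cases "tl cs") auto
  ultimately have c_eq: "c = (b, q, b1 # b0 # rest)" by simp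
  have b: "b \<in> G" and b1: "b1 \<in> G" "lt b1 b" and b0: "b0 \<in> G" "lt b0 b1"
    using c(1) unfolding c_eq is_basis_chain_def Gamma_bq_def by auto
  have "rk G lt s b0 < rk G lt s b1" "rk G lt s b1 < rk G lt s b"
    using rk_strict_mono[OF P] b b1 b0 by blast+
  then have "q - rdist G lt s b b1 - rdist G lt s b1 b0 = q - rdist G lt s b b0"
    unfolding rdist_def by simp
  note dd = amul_dcoef_dcoef[OF T[unfolded c_eq] this]
  show ?thesis
    using fA_mult_congruent[OF P D b b1(1) b0(1) b1(2) b0(2) g, of m] unfolding c_eq
    by (cases "c' = (b0, q - rdist G lt s b b0, rest)") (simp_all add: dd Fil_zero)
qed

end

theorem lemma3p4:
  fixes G :: "'v set" and lt :: "'v \<Rightarrow> 'v \<Rightarrow> bool" and s :: 'v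
    and dist :: "'v \<Rightarrow> 'v" and n :: nat
    and x :: "'v \<times> nat \<times> 'v list \<Rightarrow> ('v, 'a::field) Arep"
  assumes "finite_ranked_poset G lt s"
    and "\<forall>y\<in>G - {s}. covers G lt s y (dist y)"
    and "finite {c. x c \<noteq> azero}"
    and "\<forall>c. x c \<noteq> azero \<longrightarrow> is_basis_chain G lt s c \<and> length (snd (snd c)) = n + 2"
    and "\<forall>c. is_Arep G lt s (x c)"
  shows "\<forall>c'. Aeq G lt s (Dmap G lt s dist (Dmap G lt s dist x) c') azero"
proof (intro allI)
  fix c'
  define T where "T = (\<Union>c\<in>{c. x c \<noteq> azero}. d_support G lt s c)"
  have T: "finite T" "\<And>c. x c \<noteq> azero \<Longrightarrow> d_support G lt s c \<subseteq> T"
    unfolding T_def using assms(3) finite_d_support by auto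
  show "Aeq G lt s (Dmap G lt s dist (Dmap G lt s dist x) c') azero"
    unfolding Aeq_azero_iff
  proof
    fix m
    have "Dmap G lt s dist (Dmap G lt s dist x) c' m = (\<lambda>w. \<Sum>c | x c \<noteq> azero.
        \<Sum>c2\<in>T. amul (amul (x c) (dcoef G lt s dist c c2)) (dcoef G lt s dist c2 c') m w)"
      using Dmap_Dmap_eq_sum[OF assms(3) T] by (intro ext)
    also have "\<dots> \<in> Fil G lt s (int m - 1)"
      using assms(4,5) T(2)
      by (intro Fil_sum[OF assms(3)] dd_basis_chain_in_Fil[OF assms(1,2)] T(1)) (auto simp: is_Arep_def)
    finally show "Dmap G lt s dist (Dmap G lt s dist x) c' m \<in> Fil G lt s (int m - 1)" .
  qed
qed

end
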